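(* Let $(\mathbb{X},d,\mu)$ be a proper, geodesic metric measure space, $\Omega\subset\mathbb{X}$ a bounded domain and $\varrho$ an admissible radius function in $\Omega$. Suppose that for every compact $K\subset\Omega$ a modulus of continuity $\mathcal{W}_{\mu,K}$ is given such that $|\mathcal{M}^nv(x)-\mathcal{M}^nv(y)|\le\|v\|_\infty\mathcal{W}_{\mu,K}(d(x,y))$ for all $v\in L^\infty(\Omega)$, $x,y\in K$, $n\in\mathbb{N}$. Let $|\alpha|\leq1$, $u\in C(\overline\Omega)$, $K\subset\Omega$ compact, and let $\omega$ be a concave modulus of continuity for $u$ on $\widetilde K$. Then for all $x,y\in K$, $$|\mathcal{T}_\alpha u(x)-\mathcal{T}_\alpha u(y)|\leq|\alpha|\,\omega\left(\widehat\omega_\varrho(d(x,y))\right)+(1-\alpha)\|u\|_\infty\mathcal{W}_{\mu,K}(d(x,y)).$$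
   Context: A metric space is proper if closed bounded sets are compact, and geodesic if any two points $x,y$ are joined by a curve of length $d(x,y)$. A metric measure space is a metric space with a positive Borel regular measure $\mu$ with $0<\mu(B)<\infty$ for every ball $B$. An admissible radius function in $\Omega$ is $\varrho\in C(\overline\Omega)$, $\varrho\ge0$, with $0<\varrho(x)\leq\mathrm{dist}(x,\partial\Omega)$ for $x\in\Omega$ and $\varrho=0$ exactly on $\partial\Omega$. $B_x=\overline{B}(x,\varrho(x))$, $\widetilde K=\bigcup_{x\in K}B_x$. For $x\in\Omega$: $\mathcal{M}u(x)=\frac{1}{\mu(B_x)}\int_{B_x}u\,d\mu$, $\mathcal{S}u(x)=\frac12(\sup_{B_x}u+\inf_{B_x}u)$, $\mathcal{T}_\alpha u=\alpha\mathcal{S}u+(1-\alpha)\mathcal{M}u$. A modulus of continuity is a nondecreasing continuous $\omega:[0,\mathrm{diam}\,\Omega]\to[0,\infty)$ with $\omega(0)=0$. Fix a concave modulus of continuity $\omega_{\varrho,\Omega}$ for $\varrho$ on $\Omega$ with $\omega_{\varrho,\Omega}(\mathrm{diam}\,\Omega)\le\mathrm{diam}\,\Omega$; set $\widehat\omega_\varrho(t)=t$ if $\omega_{\varrho,\Omega}(t)\le t$ for all $t\in[0,\mathrm{diam}\,\Omega]$, and otherwise $\widehat\omega_\varrho(t)=\frac{\mathrm{diam}\,\Omega}{\omega_{\varrho,\Omega}(\mathrm{diam}\,\Omega)}\omega_{\varrho,\Omega}(t)$. *)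

theory Defs
  imports "HOL-Analysis.Analysis"
begin

definition proper_space :: "'a::metric_space itself \<Rightarrow> bool" where
  "proper_space _ \<longleftrightarrow> (\<forall>S::'a set. closed S \<and> bounded S \<longrightarrow> compact S)"

definition curve_length :: "(real \<Rightarrow> 'a::metric_space) \<Rightarrow> ereal" where
  "curve_length g = (SUP p \<in> {(n, t). mono_on {..n} (t::nat \<Rightarrow> real) \<and> t ` {..n} \<subseteq> {0..1}}.
      ereal (\<Sum>i<fst p. dist (g (snd p i)) (g (snd p (Suc i)))))"

definition geodesic_space :: "'a::metric_space itself \<Rightarrow> bool" where
  "geodesic_space _ \<longleftrightarrow> (\<forall>x y::'a. \<exists>g. continuous_on {0..1} g \<and> g 0 = x \<and> g 1 = y
      \<and> curve_length g = ereal (dist x y))"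

definition metric_measure_space :: "'a::metric_space measure \<Rightarrow> bool" where
  "metric_measure_space \<mu> \<longleftrightarrow> sets \<mu> = sets borel \<and>
      (\<forall>x r. r > 0 \<longrightarrow> 0 < emeasure \<mu> (ball x r) \<and> emeasure \<mu> (ball x r) < \<infinity>)"

definition bounded_domain :: "'a::metric_space set \<Rightarrow> bool" where
  "bounded_domain \<Omega> \<longleftrightarrow> \<Omega> \<noteq> {} \<and> open \<Omega> \<and> connected \<Omega> \<and> bounded \<Omega>"

text \<open>Admissible radius function. If the boundary is empty, dist(x, boundary) is taken
  to be +infinity, so the upper bound is vacuous.\<close>
definition admissible_radius :: "'a::metric_space set \<Rightarrow> ('a \<Rightarrow> real) \<Rightarrow> bool" where
  "admissible_radius \<Omega> \<rho> \<longleftrightarrow> continuous_on (closure \<Omega>) \<rho> \<and>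
      (\<forall>x\<in>closure \<Omega>. \<rho> x \<ge> 0) \<and>
      (\<forall>x\<in>\<Omega>. 0 < \<rho> x \<and> (frontier \<Omega> \<noteq> {} \<longrightarrow> \<rho> x \<le> infdist x (frontier \<Omega>))) \<and>
      (\<forall>x\<in>closure \<Omega>. \<rho> x = 0 \<longleftrightarrow> x \<in> frontier \<Omega>)"

definition modulus :: "real \<Rightarrow> (real \<Rightarrow> real) \<Rightarrow> bool" where
  "modulus D w \<longleftrightarrow> mono_on {0..D} w \<and> continuous_on {0..D} w \<and> w 0 = 0 \<and>
      (\<forall>t\<in>{0..D}. 0 \<le> w t)"

definition modulus_for :: "real \<Rightarrow> (real \<Rightarrow> real) \<Rightarrow> ('a::metric_space \<Rightarrow> real) \<Rightarrow> 'a set \<Rightarrow> bool" where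
  "modulus_for D w f A \<longleftrightarrow> modulus D w \<and> (\<forall>x\<in>A. \<forall>y\<in>A. \<bar>f x - f y\<bar> \<le> w (dist x y))"

definition omega_hat :: "real \<Rightarrow> (real \<Rightarrow> real) \<Rightarrow> real \<Rightarrow> real" where
  "omega_hat D wr t = (if (\<forall>s\<in>{0..D}. wr s \<le> s) then t else D / wr D * wr t)"

definition Bx :: "('a::metric_space \<Rightarrow> real) \<Rightarrow> 'a \<Rightarrow> 'a set" where
  "Bx \<rho> x = cball x (\<rho> x)"

definition Ktilde :: "('a::metric_space \<Rightarrow> real) \<Rightarrow> 'a set \<Rightarrow> 'a set" where
  "Ktilde \<rho> K = (\<Union>x\<in>K. Bx \<rho> x)"

text \<open>Mean value operator; outside Omega (where rho = 0 on the boundary) it acts as the identity.\<close>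
definition Mop :: "'a::metric_space measure \<Rightarrow> ('a \<Rightarrow> real) \<Rightarrow> 'a set \<Rightarrow> ('a \<Rightarrow> real) \<Rightarrow> 'a \<Rightarrow> real" where
  "Mop \<mu> \<rho> \<Omega> u x = (if x \<in> \<Omega> then (\<integral>y\<in>Bx \<rho> x. u y \<partial>\<mu>) / measure \<mu> (Bx \<rho> x) else u x)"

definition Sop :: "('a::metric_space \<Rightarrow> real) \<Rightarrow> 'a set \<Rightarrow> ('a \<Rightarrow> real) \<Rightarrow> 'a \<Rightarrow> real" where
  "Sop \<rho> \<Omega> u x = (if x \<in> \<Omega> then (Sup (u ` Bx \<rho> x) + Inf (u ` Bx \<rho> x)) / 2 else u x)"

definition Top :: "'a::metric_space measure \<Rightarrow> ('a \<Rightarrow> real) \<Rightarrow> 'a set \<Rightarrow> real \<Rightarrow> ('a \<Rightarrow> real) \<Rightarrow> 'a \<Rightarrow> real" where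
  "Top \<mu> \<rho> \<Omega> \<alpha> u x = \<alpha> * Sop \<rho> \<Omega> u x + (1 - \<alpha>) * Mop \<mu> \<rho> \<Omega> u x"

definition ess_bounded_on :: "'a measure \<Rightarrow> 'a set \<Rightarrow> ('a \<Rightarrow> real) \<Rightarrow> bool" where
  "ess_bounded_on \<mu> A v \<longleftrightarrow> (\<exists>C. AE x in \<mu>. x \<in> A \<longrightarrow> \<bar>v x\<bar> \<le> C)"

definition ess_norm :: "'a measure \<Rightarrow> 'a set \<Rightarrow> ('a \<Rightarrow> real) \<Rightarrow> real" where
  "ess_norm \<mu> A v = Inf {C. 0 \<le> C \<and> (AE x in \<mu>. x \<in> A \<longrightarrow> \<bar>v x\<bar> \<le> C)}"

end

theory Submission imports Defs begin

text \<open>The midrange operator \<open>\<S>\<close> and the mean value operator \<open>\<M>\<close> are estimated separately.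
  For \<open>\<S>\<close>, a geodesic lets every point of \<open>B\<^sub>x\<close> be moved into \<open>B\<^sub>y\<close> by at most
  \<open>max 0 (d(x,y) + \<rho>(x) - \<rho>(y))\<close>, which controls the supremum over \<open>B\<^sub>x\<close> by the one over \<open>B\<^sub>y\<close>,
  and symmetrically for the infima; concavity of \<open>\<omega>\<close> merges the two shifts into
  \<open>\<omega>(max (d(x,y)) \<bar>\<rho>(x) - \<rho>(y)\<bar>)\<close>, and \<open>max (d(x,y)) \<bar>\<rho>(x) - \<rho>(y)\<bar> \<le> \<widehat>\<omega>\<^sub>\<rho>(d(x,y))\<close> because
  concavity of \<open>\<omega>\<^sub>\<rho>\<close> gives \<open>t \<le> \<widehat>\<omega>\<^sub>\<rho>(t)\<close>. For \<open>\<M>\<close>, the hypothesis on \<open>\<M>\<^sup>n\<close> with \<open>n = 1\<close>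
  applies to \<open>u\<close> set to zero outside \<open>closure \<Omega>\<close>, which changes no ball average because
  every \<open>B\<^sub>x\<close> lies in \<open>closure \<Omega>\<close>.\<close>

lemma geodesic_spaceE:
  fixes x y :: "'a::metric_space"
  assumes "geodesic_space TYPE('a)"
  obtains g :: "real \<Rightarrow> 'a" where "continuous_on {0..1} g" "g 0 = x" "g 1 = y"
    "\<And>t. t \<in> {0..1} \<Longrightarrow> dist x (g t) + dist (g t) y \<le> dist x y"
proof -
  obtain g where g: "continuous_on {0..1} g" "g 0 = x" "g 1 = y" "curve_length g = ereal (dist x y)"
    using assms unfolding geodesic_space_def by blast
  have "dist x (g t) + dist (g t) y \<le> dist x y" if t: "t \<in> {0..1}" for t
  proof -
    define p where "p = (\<lambda>i::nat. if i = 0 then 0 else if i = 1 then t else (1::real))"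
    have "(2::nat, p) \<in> {(n, t). mono_on {..n} (t::nat \<Rightarrow> real) \<and> t ` {..n} \<subseteq> {0..1}}"
      using t by (auto simp: p_def mono_on_def)
    hence "ereal (\<Sum>i<2. dist (g (p i)) (g (p (Suc i)))) \<le> curve_length g"
      unfolding curve_length_def by (rule SUP_upper2) simp
    moreover have "(\<Sum>i<2. dist (g (p i)) (g (p (Suc i)))) = dist x (g t) + dist (g t) y"
      by (simp add: p_def numeral_2_eq_2 g)
    ultimately show ?thesis using g(4) by simp
  qed
  with g that show ?thesis by blast
qed

lemma geodesic_point_at_dist:
  fixes y z :: "'a::metric_space"
  assumes "geodesic_space TYPE('a)" "0 \<le> s" "s \<le> dist y z"
  obtains w where "dist y w = s" "dist w z \<le> dist y z - s"
proof -
  obtain g :: "real \<Rightarrow> 'a" where g: "continuous_on {0..1} g" "g 0 = y" "g 1 = z"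
     "\<And>t. t \<in> {0..1} \<Longrightarrow> dist y (g t) + dist (g t) z \<le> dist y z"
    using geodesic_spaceE[OF assms(1)] by blast
  have "continuous_on {0..1} (\<lambda>t. dist y (g t))"
    by (intro continuous_intros g(1))
  then obtain t where "t \<in> {0..1}" "dist y (g t) = s"
    using IVT'[of "\<lambda>t. dist y (g t)" 0 s 1] g assms by auto
  with g(4) that show ?thesis by force
qed

lemma Bx_subset_closure:
  fixes \<Omega> :: "'a::metric_space set"
  assumes geo: "geodesic_space TYPE('a)" and adm: "admissible_radius \<Omega> \<rho>"
    and x: "x \<in> \<Omega>"
  shows "Bx \<rho> x \<subseteq> closure \<Omega>"
proof
  fix z assume z: "z \<in> Bx \<rho> x"
  show "z \<in> closure \<Omega>"
  proof (rule ccontr)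
    assume z_out: "z \<notin> closure \<Omega>"
    obtain g :: "real \<Rightarrow> 'a" where g: "continuous_on {0..1} g" "g 0 = x" "g 1 = z"
      "\<And>t. t \<in> {0..1} \<Longrightarrow> dist x (g t) + dist (g t) z \<le> dist x z"
      using geodesic_spaceE[OF geo] by blast
    have "x \<in> g ` {0..1}" "z \<in> g ` {0..1}"
      using image_eqI[of x g 0] image_eqI[of z g 1] g(2,3) by auto
    moreover have "z \<notin> \<Omega>" using z_out closure_subset by blast
    ultimately have "g ` {0..1} \<inter> \<Omega> \<noteq> {}" "g ` {0..1} - \<Omega> \<noteq> {}" using x by blast+
    with connected_continuous_image[OF g(1) connected_Icc]
    have "g ` {0..1} \<inter> frontier \<Omega> \<noteq> {}" by (rule connected_Int_frontier)
    then obtain t where t: "t \<in> {0..1}" "g t \<in> frontier \<Omega>" by blast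
    have "g t \<noteq> z" using t z_out by (metis Diff_iff frontier_def)
    hence "0 < dist (g t) z" by simp
    with g(4)[OF t(1)] have "dist x (g t) < dist x z" by linarith
    moreover have "dist x z \<le> \<rho> x" using z by (simp add: Bx_def)
    moreover have "\<rho> x \<le> infdist x (frontier \<Omega>)"
      using adm x t unfolding admissible_radius_def by blast
    moreover have "infdist x (frontier \<Omega>) \<le> dist x (g t)" using t(2) by (rule infdist_le)
    ultimately show False by linarith
  qed
qed

lemma Bx_point_near_Bx:
  fixes z :: "'a::metric_space"
  assumes geo: "geodesic_space TYPE('a)" and "0 \<le> \<rho> y" and z: "z \<in> Bx \<rho> x"
  obtains z' where "z' \<in> Bx \<rho> y" "dist z z' \<le> max 0 (dist x y + \<rho> x - \<rho> y)"
proof (cases "dist y z \<le> \<rho> y")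
  case True
  then show ?thesis using that[of z] by (simp add: Bx_def)
next
  case False
  hence "\<rho> y \<le> dist y z" by simp
  then obtain w where w: "dist y w = \<rho> y" "dist w z \<le> dist y z - \<rho> y"
    using geodesic_point_at_dist[OF geo \<open>0 \<le> \<rho> y\<close>] by blast
  have "dist y z \<le> dist x y + dist x z" by (metis dist_commute dist_triangle)
  moreover have "dist x z \<le> \<rho> x" using z by (simp add: Bx_def)
  moreover have "dist z w = dist w z" by (rule dist_commute)
  ultimately have "dist z w \<le> max 0 (dist x y + \<rho> x - \<rho> y)" using w(2) by linarith
  moreover have "w \<in> Bx \<rho> y" using w(1) by (simp add: Bx_def)
  ultimately show ?thesis using that by blast
qed

lemma omega_hat_bounds:
  assumes m: "modulus D wr" and cc: "concave_on {0..D} wr" and wD: "wr D \<le> D"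
    and d: "0 \<le> d" "d \<le> D"
  shows "d \<le> omega_hat D wr d" "wr d \<le> omega_hat D wr d" "omega_hat D wr d \<le> D"
proof -
  have "d \<le> omega_hat D wr d \<and> wr d \<le> omega_hat D wr d \<and> omega_hat D wr d \<le> D"
  proof (cases "\<forall>s\<in>{0..D}. wr s \<le> s")
    case True thus ?thesis using d by (auto simp: omega_hat_def)
  next
    case False
    then obtain s where s: "s \<in> {0..D}" "wr s > s" by force
    have mono: "mono_on {0..D} wr" and w0: "wr 0 = 0" and "0 \<le> wr d"
      using m d by (auto simp: modulus_def)
    have D0: "D > 0" using s w0 by (cases "s = 0") auto
    have "wr s \<le> wr D" "wr d \<le> wr D" using mono s d by (auto intro: mono_onD)
    hence wD0: "wr D > 0" using s by auto
    have "(1 - d / D) * wr 0 + (d / D) * wr D \<le> wr ((1 - d / D) *\<^sub>R 0 + (d / D) *\<^sub>R D)"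
      by (rule concave_onD[OF cc]) (use D0 d in auto)
    hence "d * wr D \<le> D * wr d" using w0 D0 by (simp add: field_simps)
    hence "d \<le> D / wr D * wr d" using wD0 by (simp add: field_simps)
    moreover have "wr d \<le> D / wr D * wr d"
      using wD wD0 \<open>0 \<le> wr d\<close> by (simp add: field_simps mult_right_mono)
    moreover have "D / wr D * wr d \<le> D"
      using \<open>wr d \<le> wr D\<close> D0 wD0 by (simp add: field_simps)
    ultimately show ?thesis unfolding omega_hat_def if_not_P[OF False] by blast
  qed
  thus "d \<le> omega_hat D wr d" "wr d \<le> omega_hat D wr d" "omega_hat D wr d \<le> D" by blast+
qed

definition midrange :: "('a \<Rightarrow> real) \<Rightarrow> 'a set \<Rightarrow> real" where
  "midrange u A = (Sup (u ` A) + Inf (u ` A)) / 2"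

lemma Sop_eq_midrange: "x \<in> \<Omega> \<Longrightarrow> Sop \<rho> \<Omega> u x = midrange u (Bx \<rho> x)"
  by (simp add: Sop_def midrange_def)

lemma midrange_diff_le:
  assumes "A \<noteq> {}" "B \<noteq> {}" "bdd_above (u ` B)" "bdd_below (u ` A)"
    and A_to_B: "\<And>z. z \<in> A \<Longrightarrow> \<exists>z'\<in>B. u z \<le> u z' + c"
    and B_to_A: "\<And>z'. z' \<in> B \<Longrightarrow> \<exists>z\<in>A. u z \<le> u z' + c'"
  shows "midrange u A - midrange u B \<le> (c + c') / 2"
proof -
  have "Sup (u ` A) \<le> Sup (u ` B) + c"
  proof (rule cSUP_least[OF \<open>A \<noteq> {}\<close>])
    fix z assume "z \<in> A"
    then obtain z' where "z' \<in> B" "u z \<le> u z' + c" using A_to_B by blast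
    moreover have "u z' \<le> Sup (u ` B)" using \<open>z' \<in> B\<close> assms(3) by (rule cSUP_upper)
    ultimately show "u z \<le> Sup (u ` B) + c" by linarith
  qed
  moreover have "Inf (u ` A) \<le> Inf (u ` B) + c'"
  proof -
    have "Inf (u ` A) - c' \<le> Inf (u ` B)"
    proof (rule cINF_greatest[OF \<open>B \<noteq> {}\<close>])
      fix z' assume "z' \<in> B"
      then obtain z where "z \<in> A" "u z \<le> u z' + c'" using B_to_A by blast
      moreover have "Inf (u ` A) \<le> u z" using assms(4) \<open>z \<in> A\<close> by (rule cINF_lower)
      ultimately show "Inf (u ` A) - c' \<le> u z'" by linarith
    qed
    thus ?thesis by linarith
  qed
  ultimately show ?thesis unfolding midrange_def by argo
qed

lemma concave_on_midpoint:
  fixes w :: "real \<Rightarrow> real"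
  assumes "concave_on {0..D} w" "a \<in> {0..D}" "b \<in> {0..D}"
  shows "w a + w b \<le> 2 * w ((a + b) / 2)"
proof -
  have "(1 - 1/2) * w a + (1/2) * w b \<le> w ((1 - 1/2) *\<^sub>R a + (1/2) *\<^sub>R b)"
    by (rule concave_onD[OF assms(1)]) (use assms in auto)
  thus ?thesis by (simp add: field_simps)
qed

lemma midrange_Bx_diff_le:
  fixes u :: "'a::metric_space \<Rightarrow> real"
  assumes geo: "geodesic_space TYPE('a)"
    and "0 \<le> \<rho> x" "0 \<le> \<rho> y"
    and BA: "Bx \<rho> x \<subseteq> A" "Bx \<rho> y \<subseteq> A"
    and A_diam: "\<And>a b. a \<in> A \<Longrightarrow> b \<in> A \<Longrightarrow> dist a b \<le> D"
    and \<omega>: "modulus_for D \<omega> u A" and \<omega>_concave: "concave_on {0..D} \<omega>"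
    and bdd: "bdd_above (u ` Bx \<rho> y)" "bdd_below (u ` Bx \<rho> x)"
    and m_le: "max (dist x y) \<bar>\<rho> x - \<rho> y\<bar> \<le> D"
  shows "midrange u (Bx \<rho> x) - midrange u (Bx \<rho> y) \<le> \<omega> (max (dist x y) \<bar>\<rho> x - \<rho> y\<bar>)"
proof -
  \<comment> \<open>Capping the shifts at \<open>D\<close> keeps them in the domain of \<open>\<omega>\<close>; it costs nothing since
    distances within \<open>A\<close> are at most \<open>D\<close>.\<close>
  define a where "a = min (max 0 (dist x y + \<rho> x - \<rho> y)) D"
  define b where "b = min (max 0 (dist x y + \<rho> y - \<rho> x)) D"
  have "0 \<le> D" using m_le by (metis max.bounded_iff zero_le_dist order_trans)
  hence ab: "a \<in> {0..D}" "b \<in> {0..D}" by (auto simp: a_def b_def)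
  have mono: "mono_on {0..D} \<omega>" using \<omega> by (auto simp: modulus_for_def modulus_def)
  have shift: "u z \<le> u z' + \<omega> c" if "z \<in> A" "z' \<in> A" "dist z z' \<le> c" "c \<in> {0..D}" for z z' c
  proof -
    have "\<bar>u z - u z'\<bar> \<le> \<omega> (dist z z')" using \<omega> that by (auto simp: modulus_for_def)
    moreover have "\<omega> (dist z z') \<le> \<omega> c" using that A_diam by (intro mono_onD[OF mono]) auto
    ultimately show ?thesis by linarith
  qed
  have "midrange u (Bx \<rho> x) - midrange u (Bx \<rho> y) \<le> (\<omega> a + \<omega> b) / 2"
  proof (rule midrange_diff_le[OF _ _ bdd])
    show "Bx \<rho> x \<noteq> {}" "Bx \<rho> y \<noteq> {}" using assms(2,3) by (auto simp: Bx_def)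
  next
    fix z assume z: "z \<in> Bx \<rho> x"
    then obtain z' where z': "z' \<in> Bx \<rho> y" "dist z z' \<le> max 0 (dist x y + \<rho> x - \<rho> y)"
      using Bx_point_near_Bx[where \<rho>=\<rho> and x=x and y=y] geo assms(3) by blast
    with z BA A_diam have "dist z z' \<le> a" by (auto simp: a_def)
    with z z' BA ab show "\<exists>z'\<in>Bx \<rho> y. u z \<le> u z' + \<omega> a" by (blast intro: shift)
  next
    fix z' assume z': "z' \<in> Bx \<rho> y"
    then obtain z where z: "z \<in> Bx \<rho> x" "dist z' z \<le> max 0 (dist y x + \<rho> y - \<rho> x)"
      using Bx_point_near_Bx[where \<rho>=\<rho> and x=y and y=x] geo assms(2) by blast
    with z' BA A_diam have "dist z z' \<le> b" by (auto simp: b_def dist_commute)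
    with z z' BA ab show "\<exists>z\<in>Bx \<rho> x. u z \<le> u z' + \<omega> b" by (blast intro: shift)
  qed
  also have "\<dots> \<le> \<omega> ((a + b) / 2)" using concave_on_midpoint[OF \<omega>_concave ab] by simp
  also have "\<dots> \<le> \<omega> (max (dist x y) \<bar>\<rho> x - \<rho> y\<bar>)"
  proof (rule mono_onD[OF mono])
    show "(a + b) / 2 \<le> max (dist x y) \<bar>\<rho> x - \<rho> y\<bar>"
      by (simp add: a_def b_def max_def min_def abs_if split: if_splits)
  qed (use ab m_le in auto)
  finally show ?thesis .
qed

lemma abs_midrange_Bx_diff_le:
  fixes u :: "'a::metric_space \<Rightarrow> real"
  assumes geo: "geodesic_space TYPE('a)"
    and "0 \<le> \<rho> x" "0 \<le> \<rho> y"
    and "Bx \<rho> x \<subseteq> A" "Bx \<rho> y \<subseteq> A"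
    and "\<And>a b. a \<in> A \<Longrightarrow> b \<in> A \<Longrightarrow> dist a b \<le> D"
    and "modulus_for D \<omega> u A" "concave_on {0..D} \<omega>"
    and "bdd_above (u ` A)" "bdd_below (u ` A)"
    and "max (dist x y) \<bar>\<rho> x - \<rho> y\<bar> \<le> D"
  shows "\<bar>midrange u (Bx \<rho> x) - midrange u (Bx \<rho> y)\<bar> \<le> \<omega> (max (dist x y) \<bar>\<rho> x - \<rho> y\<bar>)"
proof -
  have bdd: "bdd_above (u ` Bx \<rho> z)" "bdd_below (u ` Bx \<rho> z)" if "Bx \<rho> z \<subseteq> A" for z
    using assms(9,10) that by (meson bdd_above_mono bdd_below_mono image_mono)+
  have "max (dist y x) \<bar>\<rho> y - \<rho> x\<bar> = max (dist x y) \<bar>\<rho> x - \<rho> y\<bar>"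
    by (simp add: dist_commute abs_minus_commute)
  moreover have "midrange u (Bx \<rho> x) - midrange u (Bx \<rho> y) \<le> \<omega> (max (dist x y) \<bar>\<rho> x - \<rho> y\<bar>)"
    by (rule midrange_Bx_diff_le) (use assms bdd in auto)
  moreover have "midrange u (Bx \<rho> y) - midrange u (Bx \<rho> x) \<le> \<omega> (max (dist y x) \<bar>\<rho> y - \<rho> x\<bar>)"
    by (rule midrange_Bx_diff_le) (use assms bdd in \<open>auto simp: dist_commute abs_minus_commute\<close>)
  ultimately show ?thesis by (simp add: abs_le_iff)
qed

lemma abs_Sop_diff_le_omega_hat:
  fixes u :: "'a::metric_space \<Rightarrow> real"
  assumes geo: "geodesic_space TYPE('a)"
    and xy: "x \<in> \<Omega>" "y \<in> \<Omega>" "0 \<le> \<rho> x" "0 \<le> \<rho> y" "dist x y \<le> D"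
    and wr: "modulus_for D wr \<rho> \<Omega>" "concave_on {0..D} wr" "wr D \<le> D"
    and BA: "Bx \<rho> x \<subseteq> A" "Bx \<rho> y \<subseteq> A"
    and A_diam: "\<And>a b. a \<in> A \<Longrightarrow> b \<in> A \<Longrightarrow> dist a b \<le> D"
    and \<omega>: "modulus_for D \<omega> u A" "concave_on {0..D} \<omega>"
    and bdd: "bdd_above (u ` A)" "bdd_below (u ` A)"
  shows "\<bar>Sop \<rho> \<Omega> u x - Sop \<rho> \<Omega> u y\<bar> \<le> \<omega> (omega_hat D wr (dist x y))"
proof -
  have d: "0 \<le> dist x y" "dist x y \<le> D" using xy by simp_all
  have "modulus D wr" "\<bar>\<rho> x - \<rho> y\<bar> \<le> wr (dist x y)"
    using wr(1) xy unfolding modulus_for_def by blast+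
  note hat = omega_hat_bounds[OF this(1) wr(2,3) d]
  have m: "max (dist x y) \<bar>\<rho> x - \<rho> y\<bar> \<le> omega_hat D wr (dist x y)"
    using hat \<open>\<bar>\<rho> x - \<rho> y\<bar> \<le> _\<close> by linarith
  have "\<bar>Sop \<rho> \<Omega> u x - Sop \<rho> \<Omega> u y\<bar> \<le> \<omega> (max (dist x y) \<bar>\<rho> x - \<rho> y\<bar>)"
    unfolding Sop_eq_midrange[OF xy(1)] Sop_eq_midrange[OF xy(2)]
    by (rule abs_midrange_Bx_diff_le[OF geo xy(3,4) BA A_diam \<omega> bdd order_trans[OF m hat(3)]])
  also have "\<dots> \<le> \<omega> (omega_hat D wr (dist x y))"
  proof -
    have "mono_on {0..D} \<omega>" using \<omega>(1) unfolding modulus_for_def modulus_def by blast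
    then show ?thesis by (rule mono_onD) (use m hat d in auto)
  qed
  finally show ?thesis .
qed

lemma Mop_cong:
  assumes "x \<in> \<Omega>" "\<And>z. z \<in> Bx \<rho> x \<Longrightarrow> v z = u z"
  shows "Mop \<mu> \<rho> \<Omega> v x = Mop \<mu> \<rho> \<Omega> u x"
proof -
  have "(\<lambda>z. indicator (Bx \<rho> x) z *\<^sub>R v z) = (\<lambda>z. indicator (Bx \<rho> x) z *\<^sub>R u z)"
    using assms(2) by (auto simp: indicator_def)
  thus ?thesis using assms(1) by (simp add: Mop_def set_lebesgue_integral_def)
qed

lemma ess_norm_le:
  assumes "0 \<le> C" "\<And>z. z \<in> A \<Longrightarrow> \<bar>v z\<bar> \<le> C"
  shows "ess_norm \<mu> A v \<le> C"
  unfolding ess_norm_def using assms by (intro cInf_lower) (auto intro: bdd_belowI[of _ 0])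

lemma Mop_diff_le_sup_norm:
  assumes mms: "metric_measure_space \<mu>"
    and cpt: "compact (closure \<Omega>)" and u_cont: "continuous_on (closure \<Omega>) u"
    and xy: "x \<in> \<Omega>" "y \<in> \<Omega>" and B: "Bx \<rho> x \<subseteq> closure \<Omega>" "Bx \<rho> y \<subseteq> closure \<Omega>"
    and "0 \<le> w"
    and M_bound: "\<And>v. v \<in> borel_measurable \<mu> \<Longrightarrow> ess_bounded_on \<mu> (closure \<Omega>) v \<Longrightarrow>
        \<bar>Mop \<mu> \<rho> \<Omega> v x - Mop \<mu> \<rho> \<Omega> v y\<bar> \<le> ess_norm \<mu> (closure \<Omega>) v * w"
  shows "\<bar>Mop \<mu> \<rho> \<Omega> u x - Mop \<mu> \<rho> \<Omega> u y\<bar> \<le> (SUP z\<in>closure \<Omega>. \<bar>u z\<bar>) * w"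
proof -
  define v where "v = (\<lambda>z. indicator (closure \<Omega>) z *\<^sub>R u z)"
  define C where "C = (SUP z\<in>closure \<Omega>. \<bar>u z\<bar>)"
  have "bounded (u ` closure \<Omega>)"
    using compact_continuous_image[OF u_cont cpt] compact_imp_bounded by blast
  hence "bdd_above ((\<lambda>z. \<bar>u z\<bar>) ` closure \<Omega>)"
    by (auto simp: bounded_iff intro: bdd_aboveI2)
  hence u_le: "\<bar>u z\<bar> \<le> C" if "z \<in> closure \<Omega>" for z
    unfolding C_def using that by (rule cSUP_upper2) simp
  have "0 \<le> C" using u_le[of x] xy(1) closure_subset by fastforce
  have v_le: "\<bar>v z\<bar> \<le> C" for z
    using u_le \<open>0 \<le> C\<close> by (auto simp: v_def indicator_def)
  have "sets \<mu> = sets borel" using mms by (simp add: metric_measure_space_def)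
  hence "v \<in> borel_measurable \<mu>"
    unfolding v_def measurable_cong_sets[OF _ refl]
    using borel_measurable_continuous_on_indicator[OF borel_closed[OF closed_closure] u_cont]
    by simp
  moreover have "ess_bounded_on \<mu> (closure \<Omega>) v"
    unfolding ess_bounded_on_def using v_le by blast
  moreover have "Mop \<mu> \<rho> \<Omega> v z = Mop \<mu> \<rho> \<Omega> u z" if "z \<in> \<Omega>" "Bx \<rho> z \<subseteq> closure \<Omega>" for z
    using that by (intro Mop_cong) (auto simp: v_def)
  ultimately have "\<bar>Mop \<mu> \<rho> \<Omega> u x - Mop \<mu> \<rho> \<Omega> u y\<bar> \<le> ess_norm \<mu> (closure \<Omega>) v * w"
    using M_bound xy B by metis
  also have "\<dots> \<le> C * w"
    using v_le \<open>0 \<le> C\<close> \<open>0 \<le> w\<close> by (intro mult_right_mono ess_norm_le) auto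
  finally show ?thesis unfolding C_def .
qed

lemma abs_Top_diff_le:
  assumes "\<bar>\<alpha>\<bar> \<le> 1"
  shows "\<bar>Top \<mu> \<rho> \<Omega> \<alpha> u x - Top \<mu> \<rho> \<Omega> \<alpha> u y\<bar>
    \<le> \<bar>\<alpha>\<bar> * \<bar>Sop \<rho> \<Omega> u x - Sop \<rho> \<Omega> u y\<bar> + (1 - \<alpha>) * \<bar>Mop \<mu> \<rho> \<Omega> u x - Mop \<mu> \<rho> \<Omega> u y\<bar>"
proof -
  have "Top \<mu> \<rho> \<Omega> \<alpha> u x - Top \<mu> \<rho> \<Omega> \<alpha> u y
      = \<alpha> * (Sop \<rho> \<Omega> u x - Sop \<rho> \<Omega> u y) + (1 - \<alpha>) * (Mop \<mu> \<rho> \<Omega> u x - Mop \<mu> \<rho> \<Omega> u y)"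
    by (simp add: Top_def algebra_simps)
  also have "\<bar>\<dots>\<bar> \<le> \<bar>\<alpha> * (Sop \<rho> \<Omega> u x - Sop \<rho> \<Omega> u y)\<bar> + \<bar>(1 - \<alpha>) * (Mop \<mu> \<rho> \<Omega> u x - Mop \<mu> \<rho> \<Omega> u y)\<bar>"
    by (rule abs_triangle_ineq)
  also have "\<dots> = \<bar>\<alpha>\<bar> * \<bar>Sop \<rho> \<Omega> u x - Sop \<rho> \<Omega> u y\<bar> + (1 - \<alpha>) * \<bar>Mop \<mu> \<rho> \<Omega> u x - Mop \<mu> \<rho> \<Omega> u y\<bar>"
    using assms by (simp add: abs_mult)
  finally show ?thesis .
qed


theorem lemma4p2:
  fixes \<mu> :: "'a::metric_space measure"
    and \<Omega> :: "'a set"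
    and \<rho> :: "'a \<Rightarrow> real"
    and wr :: "real \<Rightarrow> real"
    and W :: "'a set \<Rightarrow> real \<Rightarrow> real"
    and \<alpha> :: real
    and u :: "'a \<Rightarrow> real"
    and K :: "'a set"
    and \<omega> :: "real \<Rightarrow> real"
  assumes proper: "proper_space TYPE('a)"
    and geodesic: "geodesic_space TYPE('a)"
    and mms: "metric_measure_space \<mu>"
    and dom: "bounded_domain \<Omega>"
    and adm: "admissible_radius \<Omega> \<rho>"
    and wr: "modulus_for (diameter \<Omega>) wr \<rho> \<Omega>"
    and wr_concave: "concave_on {0..diameter \<Omega>} wr"
    and wr_diam: "wr (diameter \<Omega>) \<le> diameter \<Omega>"
    and W_mod: "\<And>K'. compact K' \<Longrightarrow> K' \<subseteq> \<Omega> \<Longrightarrow> modulus (diameter \<Omega>) (W K')"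
    and W_bound: "\<And>K' v x y n. compact K' \<Longrightarrow> K' \<subseteq> \<Omega> \<Longrightarrow>
        v \<in> borel_measurable \<mu> \<Longrightarrow> ess_bounded_on \<mu> (closure \<Omega>) v \<Longrightarrow>
        x \<in> K' \<Longrightarrow> y \<in> K' \<Longrightarrow> n \<ge> 1 \<Longrightarrow>
        \<bar>(Mop \<mu> \<rho> \<Omega> ^^ n) v x - (Mop \<mu> \<rho> \<Omega> ^^ n) v y\<bar>
          \<le> ess_norm \<mu> (closure \<Omega>) v * W K' (dist x y)"
    and alpha: "\<bar>\<alpha>\<bar> \<le> 1"
    and u_cont: "continuous_on (closure \<Omega>) u"
    and K: "compact K" "K \<subseteq> \<Omega>"
    and \<omega>: "modulus_for (diameter \<Omega>) \<omega> u (Ktilde \<rho> K)"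
    and \<omega>_concave: "concave_on {0..diameter \<Omega>} \<omega>"
  shows "\<forall>x\<in>K. \<forall>y\<in>K.
    \<bar>Top \<mu> \<rho> \<Omega> \<alpha> u x - Top \<mu> \<rho> \<Omega> \<alpha> u y\<bar>
      \<le> \<bar>\<alpha>\<bar> * \<omega> (omega_hat (diameter \<Omega>) wr (dist x y))
        + (1 - \<alpha>) * (SUP z\<in>closure \<Omega>. \<bar>u z\<bar>) * W K (dist x y)"
proof (intro ballI)
  fix x y assume "x \<in> K" "y \<in> K"
  have xy: "x \<in> \<Omega>" "y \<in> \<Omega>" using K \<open>x \<in> K\<close> \<open>y \<in> K\<close> by auto
  have "bounded \<Omega>" using dom by (simp add: bounded_domain_def)
  hence cpt: "compact (closure \<Omega>)" using proper by (simp add: proper_space_def bounded_closure)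
  have diam: "dist a b \<le> diameter \<Omega>" if "a \<in> closure \<Omega>" "b \<in> closure \<Omega>" for a b
    using diameter_bounded_bound[OF bounded_closure[OF \<open>bounded \<Omega>\<close>] that]
    by (simp add: diameter_closure[OF \<open>bounded \<Omega>\<close>])
  have B: "Bx \<rho> z \<subseteq> closure \<Omega>" if "z \<in> \<Omega>" for z
    using Bx_subset_closure[OF geodesic adm that] .
  have BK: "Bx \<rho> x \<subseteq> Ktilde \<rho> K" "Bx \<rho> y \<subseteq> Ktilde \<rho> K"
    using \<open>x \<in> K\<close> \<open>y \<in> K\<close> by (auto simp: Ktilde_def)
  have KtO: "Ktilde \<rho> K \<subseteq> closure \<Omega>" using B K by (auto simp: Ktilde_def)
  have "bounded (u ` Ktilde \<rho> K)"
    using compact_imp_bounded[OF compact_continuous_image[OF u_cont cpt]] KtO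
    by (meson bounded_subset image_mono)
  hence u_bdd: "bdd_above (u ` Ktilde \<rho> K)" "bdd_below (u ` Ktilde \<rho> K)"
    by (simp_all add: bounded_imp_bdd_above bounded_imp_bdd_below)
  have "\<forall>z\<in>\<Omega>. 0 < \<rho> z" using adm unfolding admissible_radius_def by blast
  hence r0: "0 \<le> \<rho> x" "0 \<le> \<rho> y" using xy by (simp_all add: less_imp_le)
  have d: "dist x y \<le> diameter \<Omega>" using diam xy closure_subset by auto
  have S: "\<bar>Sop \<rho> \<Omega> u x - Sop \<rho> \<Omega> u y\<bar> \<le> \<omega> (omega_hat (diameter \<Omega>) wr (dist x y))"
    using diam KtO
    by (intro abs_Sop_diff_le_omega_hat[OF geodesic xy r0 d wr wr_concave wr_diam BK _ \<omega> \<omega>_concave u_bdd])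
      blast
  have "0 \<le> W K (dist x y)" using W_mod[OF K] d unfolding modulus_def by auto
  from Mop_diff_le_sup_norm[OF mms cpt u_cont xy B[OF xy(1)] B[OF xy(2)] this]
  have M: "\<bar>Mop \<mu> \<rho> \<Omega> u x - Mop \<mu> \<rho> \<Omega> u y\<bar> \<le> (SUP z\<in>closure \<Omega>. \<bar>u z\<bar>) * W K (dist x y)"
    using W_bound[OF K _ _ \<open>x \<in> K\<close> \<open>y \<in> K\<close>, of _ 1] by simp
  have "\<bar>Top \<mu> \<rho> \<Omega> \<alpha> u x - Top \<mu> \<rho> \<Omega> \<alpha> u y\<bar>
      \<le> \<bar>\<alpha>\<bar> * \<bar>Sop \<rho> \<Omega> u x - Sop \<rho> \<Omega> u y\<bar> + (1 - \<alpha>) * \<bar>Mop \<mu> \<rho> \<Omega> u x - Mop \<mu> \<rho> \<Omega> u y\<bar>"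
    by (rule abs_Top_diff_le[OF alpha])
  also have "\<dots> \<le> \<bar>\<alpha>\<bar> * \<omega> (omega_hat (diameter \<Omega>) wr (dist x y))
      + (1 - \<alpha>) * ((SUP z\<in>closure \<Omega>. \<bar>u z\<bar>) * W K (dist x y))"
    using S M alpha by (intro add_mono mult_left_mono) auto
  finally show "\<bar>Top \<mu> \<rho> \<Omega> \<alpha> u x - Top \<mu> \<rho> \<Omega> \<alpha> u y\<bar>
      \<le> \<bar>\<alpha>\<bar> * \<omega> (omega_hat (diameter \<Omega>) wr (dist x y))
        + (1 - \<alpha>) * (SUP z\<in>closure \<Omega>. \<bar>u z\<bar>) * W K (dist x y)"
    by (simp add: mult.assoc)
qed

end
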